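(* Let $n=m=1$ (scalars $A\neq0$, $B\neq0$, $Q,R>0$) in the setting of the context, and assume $q<q_c$. Then the stability threshold satisfies $$\bar\delta(q)\ge\frac{Q(R+B^2P)}{A^2B^2P^2}+\frac{(1-q)R}{R+B^2P},$$ where $P>0$ solves $P=Q+A^2P-(1-q)(R+B^2P)^{-1}A^2B^2P^2$.
   Context: Let $A\in\mathbb{R}^{n\times n}$, $B\in\mathbb{R}^{n\times m}$ with $(A,B)$ stabilizable, and let $Q$, $R$ be symmetric positive definite. Let $q\in(0,1)$ be the loss probability of $x_{t+1}=Ax_t+\lambda_tBu_t$ with i.i.d. $\lambda_t$, $\mathcal P(\lambda_t=0)=q$. For $p\in[0,1)$ the modified Riccati equation with parameter $p$ is $X=Q+A^\top XA-(1-p)A^\top XB(R+B^\top XB)^{-1}B^\top XA$; $q_c$ is the critical loss probability such that for every $p\in[0,q_c)$ this equation has a unique positive definite solution. For $\hat q\in[0,q_c)$ let $\hat P$ be the positive definite solution for parameter $\hat q$ and $\hat K=-(R+B^\top\hat PB)^{-1}B^\top\hat PA$. Define $\mathcal C(q,\hat q)=Q+(1-q)\hat K^\top R\hat K-(q-\hat q)A^\top\hat PB(R+B^\top\hat PB)^{-1}B^\top\hat PA$ and the stability threshold $\bar\delta(q)=\sup\{\delta\ge0:\ \mathcal C(q,\hat q)\succ0 \text{ for all } \hat q\in[0,q_c)\text{ with } q-\hat q<\delta\}$ (possibly $+\infty$). *)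

theory Defs
  imports Complex_Main "HOL-Library.Extended_Real"
begin

text \<open>Scalar case n = m = 1: all matrices are real numbers, transposes are identities.\<close>

definition mare :: "real \<Rightarrow> real \<Rightarrow> real \<Rightarrow> real \<Rightarrow> real \<Rightarrow> real \<Rightarrow> bool" where
  "mare A B Q R p X \<longleftrightarrow>
     X = Q + A * X * A - (1 - p) * (A * X * B) * inverse (R + B * X * B) * (B * X * A)"

definition qcrit :: "real \<Rightarrow> real \<Rightarrow> real \<Rightarrow> real \<Rightarrow> real" where
  "qcrit A B Q R = Sup {r. 0 \<le> r \<and> r \<le> 1 \<and>
      (\<forall>p. 0 \<le> p \<and> p < r \<longrightarrow> (\<exists>!X. X > 0 \<and> mare A B Q R p X))}"

definition Phat :: "real \<Rightarrow> real \<Rightarrow> real \<Rightarrow> real \<Rightarrow> real \<Rightarrow> real" where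
  "Phat A B Q R qh = (THE X. X > 0 \<and> mare A B Q R qh X)"

definition Khat :: "real \<Rightarrow> real \<Rightarrow> real \<Rightarrow> real \<Rightarrow> real \<Rightarrow> real" where
  "Khat A B Q R qh = - (inverse (R + B * Phat A B Q R qh * B) * (B * Phat A B Q R qh * A))"

definition Ccal :: "real \<Rightarrow> real \<Rightarrow> real \<Rightarrow> real \<Rightarrow> real \<Rightarrow> real \<Rightarrow> real" where
  "Ccal A B Q R q qh = Q + (1 - q) * (Khat A B Q R qh * R * Khat A B Q R qh)
     - (q - qh) * (A * Phat A B Q R qh * B) * inverse (R + B * Phat A B Q R qh * B)
         * (B * Phat A B Q R qh * A)"

definition deltabar :: "real \<Rightarrow> real \<Rightarrow> real \<Rightarrow> real \<Rightarrow> real \<Rightarrow> ereal" where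
  "deltabar A B Q R q = Sup (ereal ` {\<delta>. \<delta> \<ge> 0 \<and>
      (\<forall>qh. 0 \<le> qh \<and> qh < qcrit A B Q R \<and> q - qh < \<delta> \<longrightarrow> Ccal A B Q R q qh > 0)})"

end

theory Submission
  imports Defs
begin

text \<open>In the scalar case a positive solution of the modified Riccati equation with parameter
  \<open>p\<close> is a positive root of the quadratic
  \<open>QR + (QB\<^sup>2 - R + A\<^sup>2R) X + (A\<^sup>2p - 1) B\<^sup>2 X\<^sup>2\<close>, which increases with \<open>p\<close>.
  If its leading coefficient at \<open>q\<close> were positive, the quadratic at \<open>q\<close> would be negative at
  the root for some parameter in \<open>(q, q\<^sub>c)\<close> and hence have two positive roots, against
  uniqueness. So the quadratic at \<open>q\<close> is non-negative on \<open>X > 0\<close> only up to its root \<open>P\<close>,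
  and the solution \<open>X'\<close> for a parameter \<open>q' \<le> q\<close> satisfies \<open>X' \<le> P\<close>.
  Finally \<open>C(q,q')\<close> is a positive multiple of \<open>f(X') - (q - q')\<close>, where \<open>f(X)\<close> is the
  claimed bound with \<open>X\<close> in place of \<open>P\<close>; \<open>f\<close> is decreasing, so \<open>q - q' < f(P)\<close> gives
  \<open>C(q,q') > 0\<close>.\<close>

lemma quadratic_root_factor:
  fixes a b c r y :: real
  assumes "a + b * r + c * r\<^sup>2 = 0"
  shows "r * (a + b * y + c * y\<^sup>2) = (y - r) * (c * r * y - a)"
proof -
  have "r * (a + b * y + c * y\<^sup>2) - (y - r) * (c * r * y - a) = y * (a + b * r + c * r\<^sup>2)"
    by (simp add: algebra_simps power2_eq_square)
  then show ?thesis using assms by simp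
qed

lemma quadratic_two_pos_roots:
  fixes a b c x0 :: real
  assumes "a > 0" "c > 0" "x0 \<ge> 0" "a + b * x0 + c * x0\<^sup>2 < 0"
  shows "\<exists>x y. 0 < x \<and> 0 < y \<and> x \<noteq> y \<and>
           a + b * x + c * x\<^sup>2 = 0 \<and> a + b * y + c * y\<^sup>2 = 0"
proof -
  have "continuous_on {0..x0} (\<lambda>x. a + b * x + c * x\<^sup>2)"
    by (intro continuous_intros)
  then obtain x where x: "0 \<le> x" "x \<le> x0" "a + b * x + c * x\<^sup>2 = 0"
    using IVT2'[of "\<lambda>x. a + b * x + c * x\<^sup>2" x0 0 0] assms by auto
  have "x \<noteq> 0" using x(3) assms(1) by auto
  with x have "x > 0" by simp
  \<comment> \<open>Vieta: the second root is \<open>a / (c x)\<close>.\<close>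
  define y where "y = a / (c * x)"
  have "y > 0" using assms \<open>x > 0\<close> by (simp add: y_def)
  have "c * x * y = a" using assms \<open>x > 0\<close> by (simp add: y_def)
  then have "a + b * y + c * y\<^sup>2 = 0"
    using quadratic_root_factor[OF x(3), of y] \<open>x > 0\<close> by simp
  moreover have "x \<noteq> y"
  proof
    assume "x = y"
    then have "c * x\<^sup>2 = a" using \<open>c * x * y = a\<close> by (simp add: power2_eq_square)
    have "x * (a + b * x0 + c * x0\<^sup>2) = (x0 - x) * (c * x * x0 - a)"
      using quadratic_root_factor[OF x(3)] .
    also have "\<dots> = c * x * (x0 - x)\<^sup>2"
      by (subst \<open>c * x\<^sup>2 = a\<close>[symmetric]) (simp add: algebra_simps power2_eq_square)
    finally have "x * (a + b * x0 + c * x0\<^sup>2) = c * x * (x0 - x)\<^sup>2" .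
    moreover have "c * x * (x0 - x)\<^sup>2 \<ge> 0" using assms \<open>x > 0\<close> by simp
    moreover have "x * (a + b * x0 + c * x0\<^sup>2) < 0"
      using assms(4) \<open>x > 0\<close> by (simp add: mult_pos_neg)
    ultimately show False by linarith
  qed
  ultimately show ?thesis using x(3) \<open>x > 0\<close> \<open>y > 0\<close> by blast
qed

lemma quadratic_nonneg_imp_le_root:
  fixes a b c r y :: real
  assumes "a > 0" "c \<le> 0" "r > 0" "y > 0"
    and "a + b * r + c * r\<^sup>2 = 0" "a + b * y + c * y\<^sup>2 \<ge> 0"
  shows "y \<le> r"
proof (rule ccontr)
  assume "\<not> y \<le> r"
  have "c * r * y \<le> 0" using assms by (simp add: mult_nonpos_nonneg)
  then have "(y - r) * (c * r * y - a) < 0"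
    using \<open>\<not> y \<le> r\<close> assms(1) by (simp add: mult_pos_neg)
  moreover have "r * (a + b * y + c * y\<^sup>2) \<ge> 0" using assms by simp
  ultimately show False using quadratic_root_factor[OF assms(5), of y] by linarith
qed

definition mare_quadratic :: "real \<Rightarrow> real \<Rightarrow> real \<Rightarrow> real \<Rightarrow> real \<Rightarrow> real \<Rightarrow> real" where
  "mare_quadratic A B Q R p X = Q * R + (Q * B\<^sup>2 - R + A\<^sup>2 * R) * X + (A\<^sup>2 * p - 1) * B\<^sup>2 * X\<^sup>2"

lemma mare_iff_mare_quadratic:
  assumes "X \<ge> 0" "R > 0"
  shows "mare A B Q R p X \<longleftrightarrow> mare_quadratic A B Q R p X = 0"
proof -
  have "R + B * X * B > 0"
    using assms by (metis add_pos_nonneg mult.commute mult_nonneg_nonneg mult.assoc zero_le_square)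
  then have "mare A B Q R p X \<longleftrightarrow>
      X * (R + B * X * B) = Q * (R + B * X * B) + A * X * A * (R + B * X * B)
        - (1 - p) * (A * X * B) * (B * X * A)"
    unfolding mare_def by (auto simp: field_simps)
  also have "\<dots> \<longleftrightarrow> mare_quadratic A B Q R p X = 0"
    unfolding mare_quadratic_def by (auto simp: algebra_simps power2_eq_square)
  finally show ?thesis .
qed

lemma mare_quadratic_param_diff:
  "mare_quadratic A B Q R p X = mare_quadratic A B Q R q X + A\<^sup>2 * B\<^sup>2 * (p - q) * X\<^sup>2"
  unfolding mare_quadratic_def by (simp add: algebra_simps)

lemma unique_mare_solution_below_qcrit:
  assumes "0 \<le> p" "p < qcrit A B Q R"
  shows "\<exists>!X. X > 0 \<and> mare A B Q R p X"
proof -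
  let ?S = "{r. 0 \<le> r \<and> r \<le> 1 \<and>
      (\<forall>p. 0 \<le> p \<and> p < r \<longrightarrow> (\<exists>!X. X > 0 \<and> mare A B Q R p X))}"
  have "0 \<in> ?S" by auto
  moreover have "bdd_above ?S" by (rule bdd_aboveI[of _ 1]) auto
  ultimately obtain r where "r \<in> ?S" "p < r"
    using assms(2) less_cSup_iff[of ?S p] unfolding qcrit_def by blast
  then show ?thesis using assms(1) by auto
qed

lemma mare_leading_coeff_nonpos_below_qcrit:
  assumes "Q > 0" "R > 0" "0 \<le> q" "q < qcrit A B Q R"
  shows "(A\<^sup>2 * q - 1) * B\<^sup>2 \<le> 0"
proof (rule ccontr)
  assume pos: "\<not> ?thesis"
  then have "A \<noteq> 0" "B \<noteq> 0" by auto
  define p where "p = (q + qcrit A B Q R) / 2"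
  have "q < p" "p < qcrit A B Q R" using assms(4) by (simp_all add: p_def)
  then obtain X0 where "X0 > 0" "mare A B Q R p X0"
    using unique_mare_solution_below_qcrit[OF _ \<open>p < qcrit A B Q R\<close>] assms(3) by auto
  then have "mare_quadratic A B Q R p X0 = 0" using mare_iff_mare_quadratic assms(2) by simp
  moreover have "A\<^sup>2 * B\<^sup>2 * (p - q) * X0\<^sup>2 > 0"
    using \<open>A \<noteq> 0\<close> \<open>B \<noteq> 0\<close> \<open>q < p\<close> \<open>X0 > 0\<close> by simp
  ultimately have "mare_quadratic A B Q R q X0 < 0"
    using mare_quadratic_param_diff[of A B Q R p X0 q] by linarith
  moreover have "Q * R > 0" "(A\<^sup>2 * q - 1) * B\<^sup>2 > 0" "X0 \<ge> 0"
    using assms(1,2) pos \<open>X0 > 0\<close> by auto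
  ultimately obtain x y where "0 < x" "0 < y" "x \<noteq> y"
      "mare_quadratic A B Q R q x = 0" "mare_quadratic A B Q R q y = 0"
    using quadratic_two_pos_roots unfolding mare_quadratic_def by blast
  then have "mare A B Q R q x" "mare A B Q R q y"
    using mare_iff_mare_quadratic assms(2) by auto
  then show False
    using unique_mare_solution_below_qcrit[OF assms(3,4)] \<open>0 < x\<close> \<open>0 < y\<close> \<open>x \<noteq> y\<close> by blast
qed

lemma Phat_pos_mare:
  assumes "0 \<le> qh" "qh < qcrit A B Q R"
  shows "Phat A B Q R qh > 0" "mare A B Q R qh (Phat A B Q R qh)"
  using theI'[OF unique_mare_solution_below_qcrit[OF assms]] unfolding Phat_def by auto

lemma Phat_le_mare_solution:
  assumes "Q > 0" "R > 0" "0 \<le> qh" "qh \<le> q" "q < qcrit A B Q R"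
    and "P > 0" "mare A B Q R q P"
  shows "Phat A B Q R qh \<le> P"
proof -
  let ?X = "Phat A B Q R qh"
  have "?X > 0" "mare A B Q R qh ?X" using Phat_pos_mare assms(3-5) by auto
  then have "mare_quadratic A B Q R qh ?X = 0" using mare_iff_mare_quadratic assms(2) by simp
  then have "mare_quadratic A B Q R q ?X \<ge> 0"
    using mare_quadratic_param_diff[of A B Q R q ?X qh] assms(4) by simp
  moreover have "mare_quadratic A B Q R q P = 0"
    using assms(2,6,7) mare_iff_mare_quadratic by simp
  moreover have "(A\<^sup>2 * q - 1) * B\<^sup>2 \<le> 0"
    using mare_leading_coeff_nonpos_below_qcrit assms(1-5) by simp
  moreover have "Q * R > 0" using assms(1,2) by simp
  ultimately show ?thesis
    using quadratic_nonneg_imp_le_root \<open>P > 0\<close> \<open>?X > 0\<close>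
    unfolding mare_quadratic_def by blast
qed

definition threshold_bound :: "real \<Rightarrow> real \<Rightarrow> real \<Rightarrow> real \<Rightarrow> real \<Rightarrow> real \<Rightarrow> real" where
  "threshold_bound A B Q R q X = Q * (R + B\<^sup>2 * X) / (A\<^sup>2 * B\<^sup>2 * X\<^sup>2) + (1 - q) * R / (R + B\<^sup>2 * X)"

lemma threshold_bound_pos:
  assumes "A \<noteq> 0" "B \<noteq> 0" "Q > 0" "R > 0" "q < 1" "X > 0"
  shows "threshold_bound A B Q R q X > 0"
  using assms unfolding threshold_bound_def
  by (intro add_pos_pos divide_pos_pos) (auto simp: add_pos_nonneg)

lemma threshold_bound_antimono:
  assumes "A \<noteq> 0" "B \<noteq> 0" "Q > 0" "R > 0" "q \<le> 1" "0 < X" "X \<le> Y"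
  shows "threshold_bound A B Q R q Y \<le> threshold_bound A B Q R q X"
proof -
  have split: "threshold_bound A B Q R q Z =
      Q * R / (A\<^sup>2 * B\<^sup>2 * Z\<^sup>2) + Q / (A\<^sup>2 * Z) + (1 - q) * R / (R + B\<^sup>2 * Z)" if "Z > 0" for Z
    using that assms(1,2) unfolding threshold_bound_def by (simp add: field_simps power2_eq_square)
  have "Y > 0" using assms by linarith
  have "Q * R / (A\<^sup>2 * B\<^sup>2 * Y\<^sup>2) \<le> Q * R / (A\<^sup>2 * B\<^sup>2 * X\<^sup>2)"
    using assms by (intro divide_left_mono mult_left_mono power_mono) auto
  moreover have "Q / (A\<^sup>2 * Y) \<le> Q / (A\<^sup>2 * X)"
    using assms by (intro divide_left_mono mult_left_mono) auto
  moreover have "(1 - q) * R / (R + B\<^sup>2 * Y) \<le> (1 - q) * R / (R + B\<^sup>2 * X)"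
    using assms by (intro divide_left_mono add_left_mono mult_left_mono mult_pos_pos add_pos_nonneg) auto
  ultimately show ?thesis using split[OF \<open>Y > 0\<close>] split[OF \<open>X > 0\<close>] by linarith
qed

lemma Ccal_eq_threshold_bound:
  assumes "A \<noteq> 0" "B \<noteq> 0" "R > 0" "Phat A B Q R qh > 0"
  defines "X \<equiv> Phat A B Q R qh"
  shows "Ccal A B Q R q qh =
           (A\<^sup>2 * B\<^sup>2 * X\<^sup>2 / (R + B\<^sup>2 * X)) * (threshold_bound A B Q R q X - (q - qh))"
proof -
  \<comment> \<open>With \<open>k = ABX\<close> and \<open>d = R + B\<^sup>2X\<close> the gain is \<open>-k/d\<close>.\<close>
  have scalar_form: "Q + (1 - q) * ((- (inverse d * k)) * R * (- (inverse d * k)))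
        - (q - qh) * k * inverse d * k
      = (k\<^sup>2 / d) * (Q * d / k\<^sup>2 + (1 - q) * R / d - (q - qh))" if "k \<noteq> 0" "d \<noteq> 0" for k d
    using that by (simp add: field_simps power2_eq_square)
  have "R + B\<^sup>2 * X > 0" using assms by (simp add: add_pos_nonneg)
  moreover have "A * B * X \<noteq> 0" using assms by simp
  moreover have "B * X * A = A * B * X" "A * X * B = A * B * X" "R + B * X * B = R + B\<^sup>2 * X"
      "A\<^sup>2 * B\<^sup>2 * X\<^sup>2 = (A * B * X)\<^sup>2"
    by (simp_all add: power2_eq_square mult_ac)
  ultimately show ?thesis
    using scalar_form[of "A * B * X" "R + B\<^sup>2 * X"]
    unfolding Ccal_def Khat_def threshold_bound_def X_def[symmetric] by (simp only:) simp
qed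

lemma Ccal_pos_iff_threshold_bound:
  assumes "A \<noteq> 0" "B \<noteq> 0" "R > 0" "Phat A B Q R qh > 0"
  shows "Ccal A B Q R q qh > 0 \<longleftrightarrow> q - qh < threshold_bound A B Q R q (Phat A B Q R qh)"
proof -
  have "A\<^sup>2 * B\<^sup>2 * (Phat A B Q R qh)\<^sup>2 / (R + B\<^sup>2 * Phat A B Q R qh) > 0"
    using assms by (simp add: add_pos_nonneg)
  then show ?thesis
    unfolding Ccal_eq_threshold_bound[OF assms] by (metis diff_gt_0_iff_gt mult_pos_pos zero_less_mult_pos)
qed

theorem theorem4:
  fixes A B Q R q P :: real
  assumes "A \<noteq> 0" and "B \<noteq> 0" and "Q > 0" and "R > 0"
    and "0 < q" and "q < 1" and "q < qcrit A B Q R"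
    and "P > 0" and "P = Q + A^2 * P - (1 - q) * inverse (R + B^2 * P) * A^2 * B^2 * P^2"
  shows "ereal (Q * (R + B^2 * P) / (A^2 * B^2 * P^2) + (1 - q) * R / (R + B^2 * P))
           \<le> deltabar A B Q R q"
proof -
  let ?d = "threshold_bound A B Q R q P"
  have "mare A B Q R q P"
    using assms(9) unfolding mare_def by (simp add: power2_eq_square mult_ac)
  have "Ccal A B Q R q qh > 0" if qh: "0 \<le> qh" "qh < qcrit A B Q R" "q - qh < ?d" for qh
  proof -
    have Phat: "Phat A B Q R qh > 0" using Phat_pos_mare qh by blast
    have "q - qh < threshold_bound A B Q R q (Phat A B Q R qh)"
    proof (cases "qh \<le> q")
      case True
      then have "Phat A B Q R qh \<le> P"
        using Phat_le_mare_solution assms(3,4,7,8) \<open>mare A B Q R q P\<close> qh(1) by blast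
      then show ?thesis using threshold_bound_antimono[of A B Q R q] assms Phat qh(3) by force
    qed (use threshold_bound_pos assms Phat in force)
    then show ?thesis using Ccal_pos_iff_threshold_bound assms Phat by blast
  qed
  moreover have "?d \<ge> 0" using threshold_bound_pos assms by (simp add: less_imp_le)
  ultimately show ?thesis
    unfolding deltabar_def threshold_bound_def[symmetric] by (intro Sup_upper) blast
qed

end
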